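(* Let $d\ge 0$, let $G$ be a countable subgroup of $\mathbb{R}^d$, and let $(H_n)_{n\ge1}$ be a Liouville, symmetric, decreasing sequence of random subsemigroups of $G$ such that for every $n$, $H_n$ spans $\mathbb{R}^d$ as a real vector space. Then almost surely there is no $n$ and no closed half-space $\{x\in\mathbb{R}^d:\langle v,x\rangle\ge 0\}$ ($v\neq 0$) containing $H_n$; i.e. almost surely $H_n$ does not eventually get trapped in a closed half-space.
   Context: Let $\mathfrak{S}(G)$ be the set of subsemigroups of $G$, viewed as a subset of $\{0,1\}^G$ with the product topology. A decreasing sequence $(H_n)$ of $\mathfrak{S}(G)$-valued random variables is Liouville if its tail $\sigma$-algebra $\bigcap_n\sigma(H_n,H_{n+1},\ldots)$ is trivial, and symmetric if for every $n$, $H_n$ and $H_n^{-1}=\{-h:h\in H_n\}$ have the same distribution. *)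

theory Defs
  imports "HOL-Probability.Probability"
begin

definition add_subgroup :: "'a::real_vector set \<Rightarrow> bool" where
  "add_subgroup G \<longleftrightarrow> 0 \<in> G \<and> (\<forall>x\<in>G. \<forall>y\<in>G. x + y \<in> G) \<and> (\<forall>x\<in>G. - x \<in> G)"

definition subsemigroup_of :: "'a::real_vector set \<Rightarrow> 'a set \<Rightarrow> bool" where
  "subsemigroup_of G H \<longleftrightarrow> H \<subseteq> G \<and> (\<forall>x\<in>H. \<forall>y\<in>H. x + y \<in> H)"

text \<open>The measurable space S(G): subsemigroups of G, with the Borel sigma-algebra of the
  product topology of {0,1}^G; for countable G this is generated by the coordinate events
  {H. g \<in> H}.\<close>
definition SG_space :: "'a::real_vector set \<Rightarrow> 'a set measure" where
  "SG_space G = sigma {H. subsemigroup_of G H}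
      {{H. subsemigroup_of G H \<and> g \<in> H} | g. g \<in> G}"

definition rv_sigma :: "'w measure \<Rightarrow> 'b measure \<Rightarrow> ('w \<Rightarrow> 'b) \<Rightarrow> 'w set set" where
  "rv_sigma M N X = {X -` A \<inter> space M | A. A \<in> sets N}"

definition (in prob_space) liouville_seq :: "'b measure \<Rightarrow> (nat \<Rightarrow> 'a \<Rightarrow> 'b) \<Rightarrow> bool" where
  "liouville_seq N H \<longleftrightarrow>
     (\<forall>E \<in> tail_events (\<lambda>k. rv_sigma M N (H k)). prob E = 0 \<or> prob E = 1)"

end

theory Submission
  imports Defs
begin

text \<open>
  Let \<open>U\<close> be the union of the dual cones \<open>{v. \<forall>h \<in> H\<^sub>n. 0 \<le> \<langle>v, h\<rangle>}\<close>, i.e. the set of normals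
  of closed half-spaces that eventually contain \<open>H\<^sub>n\<close>. Since the \<open>H\<^sub>n\<close> decrease, the event that
  \<open>U\<close> meets a fixed compact ball is a tail event, so it has probability 0 or 1; by symmetry
  of the law of \<open>H\<^sub>n\<close> the reflected ball gives the same probability. Hence almost surely, for
  a countable dense family of balls, \<open>U\<close> meets a ball iff it meets its reflection, so
  \<open>- U \<subseteq> closure U\<close>. As an increasing union of convex cones, \<open>U\<close> is a convex cone; the
  closure of a convex cone closed under negation is a subspace and therefore equal to its
  own relative interior, which lies in \<open>U\<close>. Thus \<open>U\<close> is a subspace. But each dual cone is
  pointed because \<open>H\<^sub>n\<close> spans, so \<open>U = {0}\<close>.
\<close>

definition dual_cone :: "'a::real_inner set \<Rightarrow> 'a set" where
  "dual_cone K = {v. \<forall>h\<in>K. 0 \<le> inner v h}"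

lemma mem_dual_cone_iff_subset_halfspace: "v \<in> dual_cone K \<longleftrightarrow> K \<subseteq> {x. 0 \<le> inner v x}"
  unfolding dual_cone_def by blast

lemma dual_cone_antimono: "K \<subseteq> L \<Longrightarrow> dual_cone L \<subseteq> dual_cone K"
  unfolding dual_cone_def by blast

lemma convex_dual_cone: "convex (dual_cone K)"
  unfolding dual_cone_def convex_def by (auto simp: inner_add_left)

lemma cone_dual_cone: "cone (dual_cone K)"
  unfolding dual_cone_def cone_def by auto

lemma mem_uminus_image_iff: "x \<in> uminus ` S \<longleftrightarrow> - x \<in> (S :: 'a::group_add set)"
  by (rule iffI) (auto intro: rev_image_eqI[of "- x"])

lemma dual_cone_uminus_image: "dual_cone (uminus ` K) = uminus ` dual_cone K"
  unfolding dual_cone_def by (auto simp: mem_uminus_image_iff)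

lemma dual_cone_pointed:
  assumes "span K = UNIV" "v \<in> dual_cone K" "- v \<in> dual_cone K"
  shows "v = 0"
proof -
  have "K \<subseteq> {x. inner v x = 0}"
    using assms(2,3) unfolding dual_cone_def by (auto intro: order.antisym)
  then have "span K \<subseteq> {x. inner v x = 0}"
    by (simp add: span_minimal subspace_hyperplane)
  then show "v = 0"
    using assms(1) by (metis (mono_tags) UNIV_I inner_eq_zero_iff mem_Collect_eq subsetD)
qed

lemma subspace_if_convex_cone_symmetric:
  assumes "convex S" "cone S" "S \<noteq> {}" "\<And>x. x \<in> S \<Longrightarrow> - x \<in> S"
  shows "subspace S"
  unfolding subspace_def
proof (intro conjI ballI allI)
  show "0 \<in> S"
    using assms(2,3) by (simp add: cone_contains_0)
next
  fix x y assume "x \<in> S" "y \<in> S"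
  then have "2 *\<^sub>R ((1/2) *\<^sub>R x + (1/2) *\<^sub>R y) \<in> S"
    using assms(1,2) by (simp add: convex_def cone_def)
  then show "x + y \<in> S"
    by (simp add: scaleR_add_right)
next
  fix c :: real and x assume x: "x \<in> S"
  show "c *\<^sub>R x \<in> S"
  proof (cases "c \<ge> 0")
    case True
    then show ?thesis using assms(2) x by (simp add: cone_def)
  next
    case False
    then have "(- c) *\<^sub>R (- x) \<in> S"
      using assms(2,4) x by (simp add: cone_def del: scaleR_minus_left scaleR_minus_right)
    then show ?thesis by simp
  qed
qed

lemma closed_if_convex_cone_symmetric_closure:
  fixes U :: "'a::euclidean_space set"
  assumes "convex U" "cone U" "\<And>x. x \<in> U \<Longrightarrow> - x \<in> closure U"
  shows "closed U"
proof (cases "U = {}")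
  case False
  have "uminus ` closure U = closure (uminus ` U)"
    using closure_injective_linear_image[of uminus U] by (simp add: linear_uminus)
  also have "\<dots> \<subseteq> closure U"
    using assms(3) by (metis closure_closure closure_mono image_subset_iff)
  finally have "subspace (closure U)"
    using False assms(1,2)
    by (intro subspace_if_convex_cone_symmetric) (auto simp: cone_closure)
  \<comment> \<open>a subspace is its own relative interior, and a convex set shares it with its closure\<close>
  then have "closure U = rel_interior U"
    by (metis assms(1) convex_rel_interior_closure rel_interior_affine subspace_imp_affine)
  then show ?thesis
    by (metis closure_subset_eq rel_interior_subset)
qed simp

lemma neg_mem_closure_if_balls_symmetric:
  fixes U D :: "'a::real_normed_vector set"
  assumes D: "closure D = UNIV"
    and sym: "\<And>c k. c \<in> D \<Longrightarrow> U \<inter> cball c (1 / Suc k) \<noteq> {} \<Longrightarrow> U \<inter> cball (- c) (1 / Suc k) \<noteq> {}"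
    and "x \<in> U"
  shows "- x \<in> closure U"
  unfolding closure_approachable
proof (intro allI impI)
  fix e :: real assume "e > 0"
  then obtain k :: nat where k: "1 / Suc k < e / 2"
    by (metis half_gt_zero nat_approx_posE)
  have "x \<in> closure D" "(0::real) < 1 / Suc k"
    using D by simp_all
  then obtain c where c: "c \<in> D" "dist c x < 1 / Suc k"
    unfolding closure_approachable by blast
  then have "x \<in> U \<inter> cball c (1 / Suc k)"
    using \<open>x \<in> U\<close> by (simp add: mem_cball)
  then have "U \<inter> cball (- c) (1 / Suc k) \<noteq> {}"
    using sym[OF c(1)] by blast
  then obtain u where u: "u \<in> U" "dist u (- c) \<le> 1 / Suc k"
    by (auto simp: mem_cball dist_commute)
  have "dist u (- x) \<le> dist u (- c) + dist (- c) (- x)"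
    by (rule dist_triangle)
  also have "\<dots> < e"
    using u(2) c(2) k by (simp add: dist_minus)
  finally show "\<exists>y\<in>U. dist y (- x) < e"
    using u(1) by blast
qed

lemma dual_cones_trivial_if_symmetric:
  fixes Hs :: "nat \<Rightarrow> 'a::euclidean_space set"
  defines "U \<equiv> \<Union>n. dual_cone (Hs n)"
  assumes "decseq Hs" "\<And>n. span (Hs n) = UNIV" "\<And>x. x \<in> U \<Longrightarrow> - x \<in> closure U"
  shows "dual_cone (Hs n) = {0}"
proof -
  have mono: "dual_cone (Hs m) \<subseteq> dual_cone (Hs (max m n))" for m n
    using assms(2) by (simp add: decseq_def dual_cone_antimono)
  have "convex U"
    unfolding U_def convex_def
  proof clarify
    fix x y m n and a b :: real
    assume "x \<in> dual_cone (Hs m)" "y \<in> dual_cone (Hs n)" "0 \<le> a" "0 \<le> b" "a + b = 1"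
    moreover have "x \<in> dual_cone (Hs (max m n))" "y \<in> dual_cone (Hs (max n m))"
      using calculation(1,2) mono by blast+
    ultimately have "a *\<^sub>R x + b *\<^sub>R y \<in> dual_cone (Hs (max m n))"
      by (metis convexD convex_dual_cone max.commute)
    then show "a *\<^sub>R x + b *\<^sub>R y \<in> (\<Union>n. dual_cone (Hs n))"
      by blast
  qed
  moreover have "cone U"
    unfolding U_def using cone_dual_cone by (intro cone_Union[rule_format]) blast
  ultimately have "closed U"
    using assms(4) by (rule closed_if_convex_cone_symmetric_closure)
  have "v = 0" if v: "v \<in> dual_cone (Hs n)" for v
  proof -
    have "v \<in> U"
      using v unfolding U_def by blast
    then have "- v \<in> U"
      using assms(4) \<open>closed U\<close> by (simp add: closure_closed)
    then obtain m where "- v \<in> dual_cone (Hs m)"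
      unfolding U_def by blast
    then have "- v \<in> dual_cone (Hs (max m n))" "v \<in> dual_cone (Hs (max n m))"
      using v mono by blast+
    then show "v = 0"
      using assms(3) dual_cone_pointed by (metis max.commute)
  qed
  moreover have "0 \<in> dual_cone (Hs n)"
    unfolding dual_cone_def by simp
  ultimately show ?thesis by blast
qed

corollary dual_cones_trivial_if_balls_symmetric:
  fixes Hs :: "nat \<Rightarrow> 'a::euclidean_space set"
  assumes "decseq Hs" "\<And>n. span (Hs n) = UNIV" "closure D = UNIV"
    and "\<And>c k. c \<in> D \<Longrightarrow> (\<exists>n. dual_cone (Hs n) \<inter> cball c (1 / Suc k) \<noteq> {})
                      \<Longrightarrow> (\<exists>n. dual_cone (Hs n) \<inter> cball (- c) (1 / Suc k) \<noteq> {})"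
  shows "dual_cone (Hs n) = {0}"
proof (rule dual_cones_trivial_if_symmetric[OF assms(1,2)])
  fix x assume "x \<in> (\<Union>n. dual_cone (Hs n))"
  then show "- x \<in> closure (\<Union>n. dual_cone (Hs n))"
    using assms(4) by (intro neg_mem_closure_if_balls_symmetric[OF assms(3)]) blast+
qed

lemma space_SG_space: "space (SG_space G) = {H. subsemigroup_of G H}"
  unfolding SG_space_def by (simp add: space_measure_of_conv)

lemma sets_SG_space:
  "sets (SG_space G) = sigma_sets {H. subsemigroup_of G H} {{H. subsemigroup_of G H \<and> g \<in> H} | g. g \<in> G}"
  unfolding SG_space_def by (rule sets_measure_of) auto

lemma SG_space_mem_event: "g \<in> G \<Longrightarrow> {K \<in> space (SG_space G). g \<in> K} \<in> sets (SG_space G)"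
  unfolding sets_SG_space space_SG_space by (rule sigma_sets.Basic) auto

lemma SG_space_subset_event:
  assumes "finite F" "F \<subseteq> G"
  shows "{K \<in> space (SG_space G). F \<subseteq> K} \<in> sets (SG_space G)"
  using assms
proof (induction F rule: finite_induct)
  case (insert g F)
  have "{K \<in> space (SG_space G). insert g F \<subseteq> K} =
        {K \<in> space (SG_space G). g \<in> K} \<inter> {K \<in> space (SG_space G). F \<subseteq> K}"
    by auto
  then show ?case
    using insert SG_space_mem_event[of g G] by auto
qed simp

lemma SG_space_dual_cone_meets_event:
  fixes G C :: "'a::real_inner set"
  assumes "countable G" "compact C"
  shows "{K \<in> space (SG_space G). dual_cone K \<inter> C \<noteq> {}} \<in> sets (SG_space G)"
proof -
  \<comment> \<open>by the finite intersection property of the compact \<open>C\<close>, only the countably many finite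
      subsets of \<open>G\<close> need to be tested\<close>
  define FS where "FS = {F. finite F \<and> F \<subseteq> G}"
  define Z where "Z F = {K \<in> space (SG_space G). F \<subseteq> K \<longrightarrow> dual_cone F \<inter> C \<noteq> {}}" for F
  have Z: "Z F \<in> sets (SG_space G)" if "F \<in> FS" for F
  proof (cases "dual_cone F \<inter> C = {}")
    case True
    then have "Z F = space (SG_space G) - {K \<in> space (SG_space G). F \<subseteq> K}"
      unfolding Z_def by auto
    then show ?thesis
      using SG_space_subset_event[of F G] that unfolding FS_def by auto
  qed (simp add: Z_def)
  have eq: "{K \<in> space (SG_space G). dual_cone K \<inter> C \<noteq> {}} = (\<Inter>F\<in>FS. Z F)"
  proof (intro equalityI subsetI)
    fix K assume "K \<in> {K \<in> space (SG_space G). dual_cone K \<inter> C \<noteq> {}}"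
    then show "K \<in> (\<Inter>F\<in>FS. Z F)"
      unfolding Z_def using dual_cone_antimono by blast
  next
    fix K assume K: "K \<in> (\<Inter>F\<in>FS. Z F)"
    then have "K \<in> space (SG_space G)"
      unfolding FS_def Z_def by auto
    then have "K \<subseteq> G"
      by (simp add: space_SG_space subsemigroup_of_def)
    have "C \<inter> \<Inter>((\<lambda>h. {v. 0 \<le> inner v h}) ` K) \<noteq> {}"
    proof (rule compact_imp_fip[OF assms(2)])
      show "closed T" if "T \<in> (\<lambda>h. {v. 0 \<le> inner v h}) ` K" for T
        using that closed_halfspace_ge by (auto simp: inner_commute)
    next
      fix F' assume "finite F'" "F' \<subseteq> (\<lambda>h. {v. 0 \<le> inner v h}) ` K"
      then obtain F where F: "F \<subseteq> K" "finite F" "F' = (\<lambda>h. {v. 0 \<le> inner v h}) ` F"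
        by (meson finite_subset_image)
      then have "K \<in> Z F"
        using K \<open>K \<subseteq> G\<close> unfolding FS_def by auto
      then show "C \<inter> \<Inter>F' \<noteq> {}"
        using F unfolding Z_def dual_cone_def by auto
    qed
    then show "K \<in> {K \<in> space (SG_space G). dual_cone K \<inter> C \<noteq> {}}"
      using \<open>K \<in> space (SG_space G)\<close> unfolding dual_cone_def by auto
  qed
  have "countable FS"
    unfolding FS_def using assms(1) by (rule countable_Collect_finite_subset)
  moreover have "FS \<noteq> {}"
    unfolding FS_def by blast
  ultimately show ?thesis
    unfolding eq using Z by (intro sets.countable_INT') auto
qed

lemma subsemigroup_of_uminus_image:
  assumes "add_subgroup G" "subsemigroup_of G K"
  shows "subsemigroup_of G (uminus ` K)"
  unfolding subsemigroup_of_def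
proof (intro conjI ballI)
  show "uminus ` K \<subseteq> G"
    using assms unfolding add_subgroup_def subsemigroup_of_def by auto
next
  fix x y assume "x \<in> uminus ` K" "y \<in> uminus ` K"
  then have "- (- x + - y) \<in> uminus ` K"
    using assms(2) unfolding subsemigroup_of_def by (intro imageI) auto
  then show "x + y \<in> uminus ` K"
    by (simp add: add.commute)
qed

lemma measurable_uminus_image_SG_space:
  assumes "add_subgroup G"
  shows "(\<lambda>K. uminus ` K) \<in> measurable (SG_space G) (SG_space G)"
proof (rule measurable_sigma_sets[OF sets_SG_space])
  show "(\<lambda>K. uminus ` K) \<in> space (SG_space G) \<rightarrow> {H. subsemigroup_of G H}"
    using assms by (simp add: space_SG_space subsemigroup_of_uminus_image)
next
  fix Y assume "Y \<in> {{H. subsemigroup_of G H \<and> g \<in> H} | g. g \<in> G}"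
  then obtain g where "g \<in> G" "Y = {H. subsemigroup_of G H \<and> g \<in> H}"
    by blast
  then have "(\<lambda>K. uminus ` K) -` Y \<inter> space (SG_space G) = {K \<in> space (SG_space G). - g \<in> K}"
    using assms by (force simp: space_SG_space subsemigroup_of_uminus_image)
  moreover have "- g \<in> G"
    using \<open>g \<in> G\<close> assms by (simp add: add_subgroup_def)
  ultimately show "(\<lambda>K. uminus ` K) -` Y \<inter> space (SG_space G) \<in> sets (SG_space G)"
    by (simp add: SG_space_mem_event)
qed auto

lemma countable_dense_closure_exists:
  obtains D :: "'a::euclidean_space set" where "countable D" "closure D = UNIV"
proof -
  obtain D :: "'a set" where D: "countable D" "\<And>X. open X \<Longrightarrow> X \<noteq> {} \<Longrightarrow> \<exists>d\<in>D. d \<in> X"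
    using countable_dense_exists by blast
  have "\<exists>d\<in>D. dist d x < e" if "e > 0" for x :: 'a and e :: real
    using D(2)[of "ball x e"] that by (auto simp: dist_commute)
  then have "closure D = UNIV"
    by (auto simp: closure_approachable)
  with D(1) show ?thesis
    using that by blast
qed

lemma uminus_image_cball:
  fixes c :: "'a::real_normed_vector"
  shows "uminus ` cball c r = cball (- c) r"
proof -
  have "- x \<in> cball c r \<longleftrightarrow> x \<in> cball (- c) r" for x
    using dist_minus[of c "- x"] by (simp add: mem_cball)
  then show ?thesis
    unfolding set_eq_iff mem_uminus_image_iff by blast
qed

definition dual_cone_meets_event :: "'w measure \<Rightarrow> ('w \<Rightarrow> 'a::real_inner set) \<Rightarrow> 'a set \<Rightarrow> 'w set"
  where "dual_cone_meets_event M X C = {\<omega> \<in> space M. dual_cone (X \<omega>) \<inter> C \<noteq> {}}"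

lemma dual_cone_meets_event_vimage:
  assumes "X \<in> measurable M (SG_space G)"
  shows "dual_cone_meets_event M X C = X -` {K \<in> space (SG_space G). dual_cone K \<inter> C \<noteq> {}} \<inter> space M"
  using measurable_space[OF assms] unfolding dual_cone_meets_event_def by auto

lemma dual_cone_meets_event_in_rv_sigma:
  assumes "countable G" "compact C" "X \<in> measurable M (SG_space G)"
  shows "dual_cone_meets_event M X C \<in> rv_sigma M (SG_space G) X"
  unfolding rv_sigma_def dual_cone_meets_event_vimage[OF assms(3)]
  using SG_space_dual_cone_meets_event[OF assms(1,2)] by blast

lemma dual_cone_meets_event_in_sets:
  assumes "countable G" "compact C" "X \<in> measurable M (SG_space G)"
  shows "dual_cone_meets_event M X C \<in> sets M"
  unfolding dual_cone_meets_event_vimage[OF assms(3)]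
  using assms(3) SG_space_dual_cone_meets_event[OF assms(1,2)] by (rule measurable_sets)

lemma incseq_dual_cone_meets_event:
  assumes "\<And>n \<omega>. \<omega> \<in> space M \<Longrightarrow> H (Suc n) \<omega> \<subseteq> H n \<omega>"
  shows "incseq (\<lambda>n. dual_cone_meets_event M (H n) C)"
  unfolding incseq_Suc_iff dual_cone_meets_event_def
  using assms dual_cone_antimono by blast

lemma measure_dual_cone_meets_event_uminus:
  assumes "add_subgroup G" "countable G" "compact C" "X \<in> measurable M (SG_space G)"
    and "distr M (SG_space G) X = distr M (SG_space G) (\<lambda>\<omega>. uminus ` X \<omega>)"
  shows "measure M (dual_cone_meets_event M X (uminus ` C)) = measure M (dual_cone_meets_event M X C)"
proof -
  let ?S = "SG_space G" and ?Y = "\<lambda>\<omega>. uminus ` X \<omega>"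
  define E where "E C = {K \<in> space ?S. dual_cone K \<inter> C \<noteq> {}}" for C
  have Y: "?Y \<in> measurable M ?S"
    using measurable_uminus_image_SG_space[OF assms(1)] assms(4) by measurable
  have "compact (uminus ` C)"
    using assms(3) by (simp add: compact_negations)
  then have "measure M (dual_cone_meets_event M X (uminus ` C)) = measure (distr M ?S X) (E (uminus ` C))"
    unfolding dual_cone_meets_event_vimage[OF assms(4)] E_def
    by (intro measure_distr[symmetric] assms SG_space_dual_cone_meets_event)
  also have "\<dots> = measure (distr M ?S ?Y) (E (uminus ` C))"
    using assms(5) by simp
  also have "\<dots> = measure M (?Y -` E (uminus ` C) \<inter> space M)"
    unfolding E_def
    by (intro measure_distr Y assms SG_space_dual_cone_meets_event \<open>compact (uminus ` C)\<close>)
  also have "?Y -` E (uminus ` C) \<inter> space M = dual_cone_meets_event M X C"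
    using measurable_space[OF Y]
    by (auto simp: E_def dual_cone_meets_event_def dual_cone_uminus_image simp flip: image_Int)
  finally show ?thesis .
qed

lemma (in prob_space) Union_incseq_in_tail_events:
  assumes "incseq E" "\<And>n. E n \<in> F n"
  shows "(\<Union>n. E n) \<in> tail_events F"
  unfolding tail_events_def
proof (intro INT_I)
  fix m :: nat
  have "(\<Union>n. E n) = (\<Union>i. E (i + m))"
    using assms(1) by (auto simp: incseq_def intro: le_add1)
  also have "\<dots> \<in> sigma_sets (space M) (\<Union> (F ` {m..}))"
    using assms(2) by (intro sigma_sets.Union sigma_sets.Basic) (metis UN_I atLeast_iff le_add2)
  finally show "(\<Union>n. E n) \<in> sigma_sets (space M) (\<Union> (F ` {m..}))" .
qed

lemma (in prob_space) AE_mem_iff_if_zero_one: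
  assumes "A \<in> events" "B \<in> events" "prob A = prob B" "prob A = 0 \<or> prob A = 1"
  shows "AE \<omega> in M. \<omega> \<in> A \<longleftrightarrow> \<omega> \<in> B"
  using assms(4)
proof
  assume "prob A = 0"
  then have "AE \<omega> in M. \<omega> \<notin> A" "AE \<omega> in M. \<omega> \<notin> B"
    using assms by (auto intro!: AE_not_in simp: emeasure_eq_measure null_sets_def)
  then show ?thesis
    by eventually_elim simp
next
  assume "prob A = 1"
  then have "AE \<omega> in M. \<omega> \<in> A" "AE \<omega> in M. \<omega> \<in> B"
    using assms by (simp_all add: AE_in_set_eq_1)
  then show ?thesis
    by eventually_elim simp
qed

lemma (in prob_space) AE_eventually_dual_cone_meets_uminus:
  assumes "countable G" "add_subgroup G" "compact C"
    and H: "\<And>n. H n \<in> measurable M (SG_space G)"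
    and dec: "\<And>n \<omega>. \<omega> \<in> space M \<Longrightarrow> H (Suc n) \<omega> \<subseteq> H n \<omega>"
    and "liouville_seq (SG_space G) H"
    and "\<And>n. distr M (SG_space G) (H n) = distr M (SG_space G) (\<lambda>\<omega>. uminus ` H n \<omega>)"
  shows "AE \<omega> in M. (\<exists>n. \<omega> \<in> dual_cone_meets_event M (H n) C)
                  \<longleftrightarrow> (\<exists>n. \<omega> \<in> dual_cone_meets_event M (H n) (uminus ` C))"
proof -
  define A where "A C = (\<Union>n. dual_cone_meets_event M (H n) C)" for C
  have "compact (uminus ` C)"
    using assms(3) by (simp add: compact_negations)
  have inc: "incseq (\<lambda>n. dual_cone_meets_event M (H n) C')" for C'
    using dec by (rule incseq_dual_cone_meets_event)
  have events: "range (\<lambda>n. dual_cone_meets_event M (H n) C') \<subseteq> events" if "compact C'" for C'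
    using dual_cone_meets_event_in_sets[OF assms(1) that H] by blast
  have "(\<lambda>n. prob (dual_cone_meets_event M (H n) C)) \<longlonglongrightarrow> prob (A C)"
    unfolding A_def using events[OF assms(3)] inc
    by (rule finite_Lim_measure_incseq)
  moreover have "(\<lambda>n. prob (dual_cone_meets_event M (H n) C)) \<longlonglongrightarrow> prob (A (uminus ` C))"
    unfolding A_def measure_dual_cone_meets_event_uminus[OF assms(2,1,3) H assms(7), symmetric]
    using events[OF \<open>compact (uminus ` C)\<close>] inc
    by (rule finite_Lim_measure_incseq)
  ultimately have "prob (A C) = prob (A (uminus ` C))"
    by (rule LIMSEQ_unique)
  moreover have "A C \<in> tail_events (\<lambda>n. rv_sigma M (SG_space G) (H n))"
    unfolding A_def using inc
    by (rule Union_incseq_in_tail_events) (intro dual_cone_meets_event_in_rv_sigma assms H)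
  ultimately have "AE \<omega> in M. \<omega> \<in> A C \<longleftrightarrow> \<omega> \<in> A (uminus ` C)"
    using assms(6) events[OF assms(3)] events[OF \<open>compact (uminus ` C)\<close>]
    by (intro AE_mem_iff_if_zero_one) (auto simp: A_def liouville_seq_def)
  then show ?thesis
    unfolding A_def by simp
qed

theorem mainTheorem6:
  fixes M :: "'w measure"
    and G :: "'a::euclidean_space set"
    and H :: "nat \<Rightarrow> 'w \<Rightarrow> 'a set"
  assumes "prob_space M"
    and "countable G" and "add_subgroup G"
    and "\<And>n. H n \<in> measurable M (SG_space G)"
    and "\<And>n \<omega>. \<omega> \<in> space M \<Longrightarrow> subsemigroup_of G (H n \<omega>)"
    and "\<And>n \<omega>. \<omega> \<in> space M \<Longrightarrow> H (Suc n) \<omega> \<subseteq> H n \<omega>"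
    and "prob_space.liouville_seq M (SG_space G) H"
    and "\<And>n. distr M (SG_space G) (H n) = distr M (SG_space G) (\<lambda>\<omega>. uminus ` H n \<omega>)"
    and "\<And>n \<omega>. \<omega> \<in> space M \<Longrightarrow> span (H n \<omega>) = UNIV"
  shows "AE \<omega> in M. \<forall>n. \<forall>v. v \<noteq> 0 \<longrightarrow> \<not> (H n \<omega> \<subseteq> {x. inner v x \<ge> 0})"
proof -
  interpret prob_space M by fact
  obtain D :: "'a set" where D: "countable D" "closure D = UNIV"
    using countable_dense_closure_exists by blast
  let ?meets = "\<lambda>\<omega> C. \<exists>n. \<omega> \<in> dual_cone_meets_event M (H n) C"
  have "AE \<omega> in M. \<forall>c\<in>D. \<forall>k::nat. ?meets \<omega> (cball c (1 / Suc k)) \<longleftrightarrow> ?meets \<omega> (cball (- c) (1 / Suc k))"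
    unfolding AE_ball_countable[OF D(1)] AE_all_countable
  proof (intro ballI allI)
    fix c and k :: nat
    show "AE \<omega> in M. ?meets \<omega> (cball c (1 / Suc k)) \<longleftrightarrow> ?meets \<omega> (cball (- c) (1 / Suc k))"
      unfolding uminus_image_cball[symmetric]
      by (rule AE_eventually_dual_cone_meets_uminus) (use assms in auto)
  qed
  with AE_space show ?thesis
  proof eventually_elim
    case (elim \<omega>)
    have "decseq (\<lambda>n. H n \<omega>)"
      using assms(6) elim(1) by (simp add: decseq_Suc_iff)
    then have "dual_cone (H n \<omega>) = {0}" for n
      using elim D(2) assms(9)
      by (intro dual_cones_trivial_if_balls_symmetric) (auto simp: dual_cone_meets_event_def)
    then show ?case
      unfolding mem_dual_cone_iff_subset_halfspace[symmetric] by blast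
  qed
qed

end
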